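(* Let $G$ be an ordered group and let $S$ be a finite subset of $G$ with $|S|=k\geq 1$. If $|S^2|<2|S|$, then there exist commuting elements $x,y\in G$ such that $S=\{y,yx,yx^2,\ldots,yx^{k-1}\}$. Equivalently, if $S$ is not of this form (not a geometric progression), then $|S^2|\geq 2|S|$.
   Context: An ordered group is a group $G$ (written multiplicatively) equipped with a total order $<$ that is invariant under both left and right multiplication: $a<b$ implies $ca<cb$ and $ac<bc$ for all $a,b,c\in G$. For a subset $S\subseteq G$, $S^2=\{ab : a,b\in S\}$. A geometric progression is a set of the form $\{yx^i : 0\le i\le k-1\}$ with $x,y\in G$ commuting. *)

theory Defs
  imports Main
begin

class ordered_group = monoid_mult + inverse + linorder +
  assumes left_inverse: "inverse a * a = 1"
  assumes mult_left_strict_mono: "a < b \<Longrightarrow> c * a < c * b"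
  assumes mult_right_strict_mono: "a < b \<Longrightarrow> a * c < b * c"

definition setprod2 :: "'a::times set \<Rightarrow> 'a set" where
  "setprod2 S = {a * b | a b. a \<in> S \<and> b \<in> S}"

end

theory Submission
  imports Defs
begin

text \<open>Let \<open>m\<close> be the largest element of \<open>S\<close> and \<open>t\<close> the largest element of
  \<open>S - {m}\<close>. The products \<open>t m < m m\<close> exceed every product of two elements of \<open>S - {m}\<close>,
  so removing \<open>m\<close> loses at least two products: by induction \<open>|S\<^sup>2| \<ge> 2|S| - 1\<close>, and
  \<open>|S\<^sup>2| < 2|S|\<close> forces exactly two to be lost at every step. If \<open>S - {m}\<close> is the
  progression \<open>y, y x, ..., y x^(n-1)\<close> with \<open>1 < x\<close>, then \<open>y x^(n-2) m < t m\<close> is a product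
  \<open>y y x^(i+j)\<close> of two terms of the progression, and it exceeds \<open>y x^(n-2) t = y y x^(2n-3)\<close>;
  so \<open>i + j = 2n - 2\<close>, and cancelling gives \<open>m = y x^n\<close>. When \<open>S - {m} = {a}\<close>, the four
  products of \<open>a\<close> and \<open>m\<close> take only three values, which forces \<open>a m = m a\<close>; the ratio is
  then \<open>a\<inverse> m\<close>.\<close>

context ordered_group
begin

lemma mult_left_imp_eq: "c * a = c * b \<Longrightarrow> a = b"
  by (metis less_irrefl mult_left_strict_mono neqE)

lemma mult_le_mult:
  assumes "a \<le> b" and "c \<le> d"
  shows "a * c \<le> b * d"
proof -
  have "a * c \<le> b * c"
    using assms(1) mult_right_strict_mono by (cases "a = b") (auto simp: order.order_iff_strict)
  also have "\<dots> \<le> b * d"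
    using assms(2) mult_left_strict_mono by (cases "c = d") (auto simp: order.order_iff_strict)
  finally show ?thesis .
qed

lemma right_inverse: "a * inverse a = 1"
proof -
  have "a * inverse a = (inverse (inverse a) * inverse a) * (a * inverse a)"
    by (simp add: left_inverse)
  also have "\<dots> = inverse (inverse a) * ((inverse a * a) * inverse a)"
    by (simp add: mult.assoc)
  also have "\<dots> = 1" by (simp add: left_inverse)
  finally show ?thesis .
qed

lemma one_less_power: "1 < x \<Longrightarrow> 1 < x ^ Suc n"
proof (induction n)
  case (Suc n)
  then have "1 * x < x ^ Suc n * x" using mult_right_strict_mono by blast
  then have "x < x ^ Suc (Suc n)" by (simp only: mult_1_left power_Suc2)
  then show ?case using Suc.prems by (rule order.strict_trans[rotated])
qed simp

lemma mult_power_strict_mono: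
  assumes "1 < x" and "i < j"
  shows "z * x ^ i < z * x ^ j"
proof -
  obtain d where j: "j = i + Suc d" using less_imp_Suc_add[OF \<open>i < j\<close>] by auto
  have "(z * x ^ i) * 1 < (z * x ^ i) * x ^ Suc d"
    using mult_left_strict_mono one_less_power[OF \<open>1 < x\<close>] by blast
  then show ?thesis unfolding j power_add by (simp only: mult.assoc mult_1_right)
qed

lemma mult_power_mono:
  assumes "1 \<le> x" and "i \<le> j"
  shows "z * x ^ i \<le> z * x ^ j"
proof (cases "x = 1 \<or> i = j")
  case False
  then have "1 < x" and "i < j" using assms by (auto simp: order.order_iff_strict)
  then show ?thesis by (rule less_imp_le[OF mult_power_strict_mono])
qed auto

lemma commuting_power_mult:
  assumes "x * y = y * x"
  shows "(y * x ^ i) * (y * x ^ j) = (y * y) * x ^ (i + j)"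
proof -
  have "x ^ i * y = y * x ^ i" using power_commuting_commutes[OF assms] .
  then show ?thesis by (simp add: mult.assoc power_add) (metis mult.assoc)
qed

end

definition geometric_progression :: "'a::monoid_mult \<Rightarrow> 'a \<Rightarrow> nat \<Rightarrow> 'a set" where
  "geometric_progression y x n = {y * x ^ i | i. i < n}"

lemma geometric_progression_eq_image:
  "geometric_progression y x n = (\<lambda>i. y * x ^ i) ` {..<n}"
  unfolding geometric_progression_def by auto

lemma finite_geometric_progression: "finite (geometric_progression y x n)"
  by (simp add: geometric_progression_eq_image)

lemma geometric_progression_Suc:
  "geometric_progression y x (Suc n) = insert (y * x ^ n) (geometric_progression y x n)"
  by (simp add: geometric_progression_eq_image lessThan_Suc)

lemma geometric_progression_one_ratio: "geometric_progression y 1 n \<subseteq> {y}"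
  unfolding geometric_progression_def by auto

lemma geometric_progression_le_last:
  fixes x y :: "'a::ordered_group"
  assumes "1 \<le> x" and "z \<in> geometric_progression y x n"
  shows "z \<le> y * x ^ (n - 1)"
proof -
  obtain i where "z = y * x ^ i" and "i < n"
    using assms(2) unfolding geometric_progression_def by blast
  then show ?thesis using mult_power_mono[OF assms(1), of i "n - 1" y] by simp
qed

lemma finite_setprod2:
  assumes "finite S"
  shows "finite (setprod2 S)"
proof -
  have "setprod2 S = (\<lambda>(a, b). a * b) ` (S \<times> S)" unfolding setprod2_def by auto
  then show ?thesis using assms by simp
qed

lemma setprod2_le_square:
  fixes t :: "'a::ordered_group"
  assumes "\<forall>a\<in>A. a \<le> t" and "z \<in> setprod2 A"
  shows "z \<le> t * t"
proof -
  obtain a b where "z = a * b" and "a \<in> A" and "b \<in> A"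
    using assms(2) unfolding setprod2_def by blast
  then show ?thesis using assms(1) mult_le_mult by blast
qed

lemma setprod2_insert_greater:
  fixes m :: "'a::ordered_group"
  assumes "finite A" and "t \<in> A" and "\<forall>a\<in>A. a \<le> t" and "t < m"
  shows "setprod2 A \<union> {t * m, m * m} \<subseteq> setprod2 (insert m A)"
    and "card (setprod2 A \<union> {t * m, m * m}) = card (setprod2 A) + 2"
    and "card (setprod2 (insert m A)) \<ge> card (setprod2 A) + 2"
proof -
  show sub: "setprod2 A \<union> {t * m, m * m} \<subseteq> setprod2 (insert m A)"
    using \<open>t \<in> A\<close> unfolding setprod2_def by blast
  have tt_tm: "t * t < t * m" and tm_mm: "t * m < m * m"
    using \<open>t < m\<close> by (rule mult_left_strict_mono mult_right_strict_mono)+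
  have below: "z < t * m" if "z \<in> setprod2 A" for z
    using setprod2_le_square[OF assms(3) that] tt_tm by (rule order.strict_trans1)
  have new: "t * m \<notin> setprod2 A" "m * m \<notin> insert (t * m) (setprod2 A)"
    using below[of "t * m"] below[of "m * m"] tm_mm by auto
  have eq: "setprod2 A \<union> {t * m, m * m} = insert (m * m) (insert (t * m) (setprod2 A))"
    by blast
  show card_new: "card (setprod2 A \<union> {t * m, m * m}) = card (setprod2 A) + 2"
    unfolding eq using new finite_setprod2[OF \<open>finite A\<close>] by simp
  have "finite (setprod2 (insert m A))" by (simp add: \<open>finite A\<close> finite_setprod2)
  from card_mono[OF this sub] show "card (setprod2 (insert m A)) \<ge> card (setprod2 A) + 2"
    unfolding card_new .
qed

lemma setprod2_insert_greater_eq: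
  fixes m :: "'a::ordered_group"
  assumes "finite A" and "t \<in> A" and "\<forall>a\<in>A. a \<le> t" and "t < m"
    and "card (setprod2 (insert m A)) \<le> card (setprod2 A) + 2"
  shows "setprod2 (insert m A) = setprod2 A \<union> {t * m, m * m}"
proof -
  have "finite (setprod2 (insert m A))" by (simp add: \<open>finite A\<close> finite_setprod2)
  from card_seteq[OF this setprod2_insert_greater(1)[OF assms(1-4)]] show ?thesis
    using setprod2_insert_greater(2)[OF assms(1-4)] assms(5) by simp
qed

lemma card_setprod2_ge:
  fixes S :: "'a::ordered_group set"
  assumes "finite S" and "S \<noteq> {}"
  shows "2 * card S - 1 \<le> card (setprod2 S)"
  using assms
proof (induction S rule: finite_linorder_max_induct)
  case (insert m A)
  show ?case
  proof (cases "A = {}")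
    case True
    then show ?thesis by (simp add: setprod2_def)
  next
    case False
    have "Max A \<in> A" "\<forall>a\<in>A. a \<le> Max A" using insert.hyps(1) False by simp_all
    then have "card (setprod2 (insert m A)) \<ge> card (setprod2 A) + 2"
      using setprod2_insert_greater(3) insert.hyps(1,2) by blast
    moreover have "m \<notin> A" and "card A \<ge> 1"
      using insert.hyps(1,2) False by (auto simp: Suc_le_eq)
    ultimately show ?thesis using insert False by simp
  qed
qed simp

lemma setprod2_pair_commute:
  fixes a m :: "'a::ordered_group"
  assumes "a < m" and "card (setprod2 {a, m}) \<le> 3"
  shows "a * m = m * a"
proof (rule ccontr)
  assume ne: "a * m \<noteq> m * a"
  have lt: "a * a < a * m" "a * m < m * m" "a * a < m * a" "m * a < m * m"
    using \<open>a < m\<close> by (rule mult_left_strict_mono mult_right_strict_mono)+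
  have "a * a < m * m" using lt(1,2) by (rule order.strict_trans)
  then have "card {a * a, a * m, m * a, m * m} = 4"
    using ne lt by (simp add: card_insert_if less_imp_neq)
  moreover have "{a * a, a * m, m * a, m * m} \<subseteq> setprod2 {a, m}"
    unfolding setprod2_def by blast
  ultimately have "4 \<le> card (setprod2 {a, m})"
    by (metis card_mono finite.emptyI finite.insertI finite_setprod2)
  then show False using assms(2) by simp
qed

lemma pair_eq_geometric_progression:
  fixes a m :: "'a::ordered_group"
  assumes "a < m" and "a * m = m * a"
  shows "\<exists>x. x * a = a * x \<and> 1 < x \<and> {a, m} = geometric_progression a x 2"
proof (intro exI conjI)
  define x where "x = inverse a * m"
  have ax: "a * x = m" unfolding x_def by (simp add: mult.assoc[symmetric] right_inverse)
  have "x * a = inverse a * (a * m)" unfolding x_def \<open>a * m = m * a\<close> by (simp only: mult.assoc)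
  then show "x * a = a * x" unfolding ax by (simp add: mult.assoc[symmetric] left_inverse)
  show "1 < x"
    unfolding x_def using mult_left_strict_mono[OF \<open>a < m\<close>, of "inverse a"] by (simp add: left_inverse)
  show "{a, m} = geometric_progression a x 2"
    using ax by (simp add: geometric_progression_eq_image numeral_2_eq_2 lessThan_Suc insert_commute)
qed

lemma geometric_progression_extend:
  fixes x y m :: "'a::ordered_group"
  assumes "1 < x" and comm: "x * y = y * x" and "2 \<le> n" and "y * x ^ (n - 1) < m"
    and "y * x ^ (n - 2) * m \<in> setprod2 (geometric_progression y x n)"
  shows "m = y * x ^ n"
proof -
  obtain a b where ab: "y * x ^ (n - 2) * m = a * b"
    and "a \<in> geometric_progression y x n" and "b \<in> geometric_progression y x n"
    using assms(5) unfolding setprod2_def by blast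
  then obtain i j where "i < n" "j < n" and "a = y * x ^ i" "b = y * x ^ j"
    unfolding geometric_progression_def by blast
  with ab have sm: "y * x ^ (n - 2) * m = (y * y) * x ^ (i + j)"
    by (simp only: commuting_power_mult[OF comm])
  have "y * x ^ (n - 2) * (y * x ^ (n - 1)) < y * x ^ (n - 2) * m"
    by (rule mult_left_strict_mono[OF assms(4)])
  then have lower: "(y * y) * x ^ (n - 2 + (n - 1)) < (y * y) * x ^ (i + j)"
    unfolding sm commuting_power_mult[OF comm] .
  have "\<not> i + j \<le> n - 2 + (n - 1)"
  proof
    assume "i + j \<le> n - 2 + (n - 1)"
    then have "(y * y) * x ^ (i + j) \<le> (y * y) * x ^ (n - 2 + (n - 1))"
      by (rule mult_power_mono[OF order.strict_implies_order[OF \<open>1 < x\<close>]])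
    with lower show False by simp
  qed
  then have "i + j = n - 2 + n" using \<open>i < n\<close> \<open>j < n\<close> \<open>2 \<le> n\<close> by linarith
  then have "y * x ^ (n - 2) * m = y * x ^ (n - 2) * (y * x ^ n)"
    unfolding sm commuting_power_mult[OF comm] by simp
  then show ?thesis by (rule mult_left_imp_eq)
qed

lemma geometric_progression_insert_greater:
  fixes x y m :: "'a::ordered_group"
  assumes "1 < x" and comm: "x * y = y * x" and "2 \<le> n"
    and greater: "\<forall>a\<in>geometric_progression y x n. a < m"
    and card_le: "card (setprod2 (insert m (geometric_progression y x n)))
      \<le> card (setprod2 (geometric_progression y x n)) + 2"
  shows "m = y * x ^ n"
proof -
  let ?A = "geometric_progression y x n"
  define s t where "s = y * x ^ (n - 2)" and "t = y * x ^ (n - 1)"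
  have "s \<in> ?A" and "t \<in> ?A"
    unfolding s_def t_def geometric_progression_def using \<open>2 \<le> n\<close> by auto
  have t_max: "\<forall>a\<in>?A. a \<le> t"
    unfolding t_def using geometric_progression_le_last[OF less_imp_le[OF \<open>1 < x\<close>]] by blast
  have "t < m" using greater \<open>t \<in> ?A\<close> by blast
  have square: "setprod2 (insert m ?A) = setprod2 ?A \<union> {t * m, m * m}"
    using setprod2_insert_greater_eq[OF finite_geometric_progression \<open>t \<in> ?A\<close> t_max \<open>t < m\<close> card_le] .
  have "s < t" unfolding s_def t_def using \<open>1 < x\<close> \<open>2 \<le> n\<close> by (simp add: mult_power_strict_mono)
  then have "s * m < t * m" by (rule mult_right_strict_mono)
  moreover have "t * m < m * m" using \<open>t < m\<close> by (rule mult_right_strict_mono)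
  moreover have "s * m \<in> setprod2 (insert m ?A)"
    using \<open>s \<in> ?A\<close> unfolding setprod2_def by blast
  ultimately have "s * m \<in> setprod2 ?A" unfolding square by auto
  then show ?thesis
    using geometric_progression_extend[OF \<open>1 < x\<close> comm \<open>2 \<le> n\<close>] \<open>t < m\<close> s_def t_def by blast
qed

lemma small_square_imp_geometric_progression:
  fixes S :: "'a::ordered_group set"
  assumes "finite S" and "S \<noteq> {}" and "card (setprod2 S) < 2 * card S"
  shows "\<exists>x y. x * y = y * x \<and> 1 \<le> x \<and> S = geometric_progression y x (card S)"
  using assms
proof (induction S rule: finite_linorder_max_induct)
  case (insert m A)
  have "m \<notin> A" using insert.hyps(2) by blast
  consider "A = {}" | a where "A = {a}" | "2 \<le> card A"
    by (metis One_nat_def card_1_singletonE card_0_eq insert.hyps(1) less_2_cases not_le)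
  then show ?case
  proof cases
    case 1
    then have "insert m A = geometric_progression m 1 (card (insert m A))"
      by (simp add: geometric_progression_eq_image lessThan_Suc)
    then show ?thesis by (intro exI[of _ 1] exI[of _ m]) simp
  next
    case (2 a)
    then have "a < m" and S: "insert m A = {a, m}" using insert.hyps(2) by auto
    then have "card (setprod2 {a, m}) \<le> 3" using insert.prems(2) by simp
    then obtain x where "x * a = a * x" "1 < x" "{a, m} = geometric_progression a x 2"
      using pair_eq_geometric_progression[OF \<open>a < m\<close> setprod2_pair_commute] \<open>a < m\<close> by blast
    moreover have "card (insert m A) = 2" using S \<open>a < m\<close> by simp
    ultimately show ?thesis unfolding S by (intro exI[of _ x] exI[of _ a]) simp
  next
    case 3
    let ?n = "card A"
    have "A \<noteq> {}" using 3 by auto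
    then have "card (setprod2 A) + 2 \<le> card (setprod2 (insert m A))"
      using setprod2_insert_greater(3) insert.hyps by (meson Max_ge Max_in)
    then have "card (setprod2 A) < 2 * ?n"
      using insert.prems(2) insert.hyps(1) \<open>m \<notin> A\<close> by simp
    then obtain x y where comm: "x * y = y * x" and "1 \<le> x" and A: "A = geometric_progression y x ?n"
      using insert.IH \<open>A \<noteq> {}\<close> by blast
    have "x \<noteq> 1"
      using geometric_progression_one_ratio[of y ?n] A 3 card_mono[of "{y}" A] by auto
    with \<open>1 \<le> x\<close> have "1 < x" by simp
    have "2 * ?n - 1 \<le> card (setprod2 A)"
      using card_setprod2_ge insert.hyps(1) \<open>A \<noteq> {}\<close> by blast
    then have "card (setprod2 (insert m A)) \<le> card (setprod2 A) + 2"
      using insert.prems(2) insert.hyps(1) \<open>m \<notin> A\<close> 3 by simp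
    then have "m = y * x ^ ?n"
      using geometric_progression_insert_greater[OF \<open>1 < x\<close> comm 3] insert.hyps(2) A by simp
    then have "insert m A = geometric_progression y x (card (insert m A))"
      using A insert.hyps(1) \<open>m \<notin> A\<close> by (simp add: geometric_progression_Suc)
    then show ?thesis using comm \<open>1 \<le> x\<close> by blast
  qed
qed simp

theorem lemma2:
  fixes S :: "'a::ordered_group set" and k :: nat
  assumes "finite S" and "card S = k" and "k \<ge> 1"
    and "card (setprod2 S) < 2 * card S"
  shows "\<exists>x y. x * y = y * x \<and> S = {y * x ^ i | i. i < k}"
proof -
  have "S \<noteq> {}" using assms(2,3) by auto
  then show ?thesis
    using small_square_imp_geometric_progression[OF assms(1) _ assms(4)] assms(2)
    unfolding geometric_progression_def by blast
qed

end
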